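(* Let $m_0<m$ be the number of true null hypotheses (i.e. $m_0=\#\{i:d^t_i=0\}$), and assume $m_0\ge1$. For the additive-loss procedure with constant threshold $\beta$ (decisions $\hat d_i=I(v_{in}>\beta)$), let $pBFDR_\beta$ be its $pBFDR$. Then for any $0<\alpha<m_0/m$ there exists a sequence $\beta_n\to0$ as $n\to\infty$ such that $\lim_{n\to\infty}pBFDR_{\beta_n}=\alpha$.
   Context: Data and models: $\mathbf X_n=(X_1,\ldots,X_n)$ are the first $n$ coordinates of a process with true distribution $P$; $p(\mathbf X_n)$ is the true joint density and $f_{\boldsymbol\theta}(\mathbf X_n)$ the postulated density for $\boldsymbol\theta=(\theta_1,\ldots,\theta_M)\in\boldsymbol\Theta=\Theta_1\times\cdots\times\Theta_M$ ($M\le\infty$). $\pi$ is a prior, $\pi(\cdot\mid\mathbf X_n)$ the posterior; $E_{\mathbf X_n}$ is expectation over the data under $P$. For $i=1,\ldots,m$ ($m$ finite) one tests $H_{0i}:\theta_i\in\Theta_{0i}$ vs $H_{1i}:\theta_i\in\Theta_{1i}$ with $\Theta_{0i}\cap\Theta_{1i}=\emptyset$, $\Theta_{0i}\cup\Theta_{1i}=\Theta_i$. Decision configurations $\mathbf d\in\mathbb D=\{0,1\}^m$ ($d_i=1$: reject $H_{0i}$); $\mathbf 0$ is the all-zero configuration. KL quantities: $h(\boldsymbol\theta)=\lim_n n^{-1}E_P[\log(p/f_{\boldsymbol\theta})(\mathbf X_n)]$, $J(\boldsymbol\theta)=h(\boldsymbol\theta)-h(\boldsymbol\Theta)$ where $h(A)=\pi\text{-}\operatorname{ess\,inf}_A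 h$, and $J(A)=\pi\text{-}\operatorname{ess\,inf}_A J$. The true configuration $\mathbf d^t$ is the unique $\mathbf d$ with $J(\prod_{i\le m}\Theta_{d_ii}\times\prod_{i>m}\Theta_i)=J(\boldsymbol\Theta)$, where $\Theta_{d_ii}$ is $\Theta_{0i}$ or $\Theta_{1i}$ according as $d_i=0$ or $1$. Let $\Upsilon_{ki}=\{\boldsymbol\theta:\theta_i\in\Theta_{ki}\}$, $J(H_{ki})=J(\Upsilon_{ki})$ and $v_{in}=\pi(\Upsilon_{1i}\mid\mathbf X_n)$. Standing assumption (conclusion of Shalizi's (2009) theorem under his conditions (S1)–(S7), assumed throughout): for all $i,k$, $\pi(\Upsilon_{ki})>0$ and $\lim_n n^{-1}\log\pi(\Upsilon_{ki}\mid\mathbf X_n)=-J(\Upsilon_{ki})$ a.s.; $J(H_{1i})>0$ if $d^t_i=0$ and $J(H_{0i})>0$ if $d^t_i=1$. Error measures for a procedure with decision indicator $\delta$: $FDR_{\mathbf X_n}=\sum_{\mathbf d}\frac{\sum_i d_i(1-v_{in})}{(\sum_i d_i)\vee1}\delta(\mathbf d\mid\mathbf X_n)$, $pBFDR=E_{\mathbf X_n}[FDR_{\mathbf X_n}\mid\delta(\mathbf 0\mid\mathbf X_n)=0]$. Known fact used (Chandra and Bhattacharya 2017): for each $n$, $\beta\mapsto pBFDR_\beta$ is continuous and non-increasing on $[0,1]$. *)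

theory Defs
  imports "HOL-Probability.Probability"
begin

text \<open>The data process lives on a probability space M (the true law P).
  For sample size n, hypothesis index i < m and outcome w, v n i w is the posterior
  probability v_in = pi(Upsilon_1i | X_n) of the alternative H_1i.\<close>

definition add_decision :: "real \<Rightarrow> (nat \<Rightarrow> real) \<Rightarrow> nat \<Rightarrow> bool" where
  "add_decision \<beta> vn i \<longleftrightarrow> vn i > \<beta>"

definition FDR_X :: "nat \<Rightarrow> (nat \<Rightarrow> real) \<Rightarrow> (nat \<Rightarrow> bool) \<Rightarrow> real" where
  "FDR_X m vn d = (\<Sum>i<m. if d i then 1 - vn i else 0) / real (max (card {i. i < m \<and> d i}) 1)"

text \<open>The event that the decision is not the all-zero configuration, i.e. delta(0 | X_n) = 0.\<close>
definition nonnull_event ::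
  "'a measure \<Rightarrow> nat \<Rightarrow> (nat \<Rightarrow> nat \<Rightarrow> 'a \<Rightarrow> real) \<Rightarrow> real \<Rightarrow> nat \<Rightarrow> 'a set" where
  "nonnull_event M m v \<beta> n = {w \<in> space M. \<exists>i<m. add_decision \<beta> (\<lambda>j. v n j w) i}"

text \<open>pBFDR_beta at sample size n: E[FDR_X | delta(0|X_n) = 0]
  = E[FDR_X ; event] / P(event) (elementary conditional expectation given an event).\<close>
definition pBFDR ::
  "'a measure \<Rightarrow> nat \<Rightarrow> (nat \<Rightarrow> nat \<Rightarrow> 'a \<Rightarrow> real) \<Rightarrow> nat \<Rightarrow> real \<Rightarrow> real" where
  "pBFDR M m v n \<beta> =
     (\<integral>w. indicator (nonnull_event M m v \<beta> n) w
            * FDR_X m (\<lambda>j. v n j w) (add_decision \<beta> (\<lambda>j. v n j w)) \<partial>M)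
     / measure M (nonnull_event M m v \<beta> n)"

end

theory Submission
  imports Defs
begin

text \<open>Posterior consistency: almost surely v_in tends to 1 on the true alternatives and to 0,
  at an exponential rate and hence through positive values, on the true nulls. For a fixed
  threshold strictly between 0 and 1 the procedure therefore eventually rejects exactly the true
  alternatives and pBFDR tends to 0, whereas with threshold 0 it eventually rejects everything and
  pBFDR tends to m0/m. Since alpha lies strictly between these limits, the intermediate value theorem
  gives, for every small e and all large n, a threshold in [0, e] at which pBFDR equals alpha; the
  least such threshold tends to 0.\<close>

lemma FDR_X_bounds:
  assumes "\<And>i. i < m \<Longrightarrow> 0 \<le> x i \<and> x i \<le> 1"
  shows "0 \<le> FDR_X m x d \<and> FDR_X m x d \<le> 1"
proof -
  have "(\<Sum>i<m. if d i then 1 - x i else 0) \<le> (\<Sum>i<m. if d i then 1 else (0::real))"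
    using assms by (intro sum_mono) auto
  also have "\<dots> = real (card ({..<m} \<inter> {i. d i}))"
    by (simp add: sum.If_cases)
  also have "{..<m} \<inter> {i. d i} = {i. i < m \<and> d i}"
    by auto
  finally have "(\<Sum>i<m. if d i then 1 - x i else 0) \<le> real (max (card {i. i < m \<and> d i}) 1)"
    by linarith
  moreover have "0 \<le> (\<Sum>i<m. if d i then 1 - x i else 0)"
    using assms by (intro sum_nonneg) auto
  ultimately show ?thesis
    unfolding FDR_X_def by (simp add: divide_le_eq_1)
qed

lemma (in prob_space) tendsto_integral_bounded:
  fixes s :: "nat \<Rightarrow> 'a \<Rightarrow> real"
  assumes "\<And>n. s n \<in> borel_measurable M"
    and "\<And>n w. w \<in> space M \<Longrightarrow> \<bar>s n w\<bar> \<le> B"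
    and "AE w in M. (\<lambda>n. s n w) \<longlonglongrightarrow> L"
  shows "(\<lambda>n. integral\<^sup>L M (s n)) \<longlonglongrightarrow> L"
proof -
  have "(\<lambda>n. integral\<^sup>L M (s n)) \<longlonglongrightarrow> integral\<^sup>L M (\<lambda>_. L)"
    by (rule integral_dominated_convergence[where w = "\<lambda>_. B"]) (use assms in auto)
  then show ?thesis
    by (simp add: prob_space)
qed

lemma nonnull_event_eq:
  "nonnull_event M m v \<beta> n = (\<Union>i<m. {w \<in> space M. \<beta> < v n i w})"
  unfolding nonnull_event_def add_decision_def by auto

lemma nonnull_event_sets:
  assumes "\<And>i. i < m \<Longrightarrow> v n i \<in> borel_measurable M"
  shows "nonnull_event M m v \<beta> n \<in> sets M"
  unfolding nonnull_event_eq using assms by (intro sets.countable_UN') auto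

lemma FDR_X_add_decision_measurable:
  assumes "\<And>i. i < m \<Longrightarrow> v n i \<in> borel_measurable M"
  shows "(\<lambda>w. FDR_X m (\<lambda>j. v n j w) (add_decision \<beta> (\<lambda>j. v n j w))) \<in> borel_measurable M"
proof -
  have card_eq: "real (max (card {i. i < m \<and> \<beta> < v n i w}) 1)
      = max (\<Sum>i<m. if \<beta> < v n i w then 1 else 0) 1" for w
  proof -
    have "{i. i < m \<and> \<beta> < v n i w} = {..<m} \<inter> {i. \<beta> < v n i w}"
      by auto
    then show ?thesis
      by (simp add: sum.If_cases of_nat_max)
  qed
  show ?thesis
    unfolding FDR_X_def add_decision_def card_eq
  proof (intro borel_measurable_divide borel_measurable_max borel_measurable_sum borel_measurable_const)
    fix i assume "i \<in> {..<m}"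
    then have [measurable]: "v n i \<in> borel_measurable M"
      using assms by auto
    show "(\<lambda>w. if \<beta> < v n i w then 1 - v n i w else 0) \<in> borel_measurable M"
      by measurable
    show "(\<lambda>w. if \<beta> < v n i w then 1 else 0::real) \<in> borel_measurable M"
      by measurable
  qed
qed

lemma FDR_X_add_decision_eq:
  assumes "\<forall>i<m. \<beta> < vn i \<longleftrightarrow> D i"
  shows "FDR_X m vn (add_decision \<beta> vn)
           = (\<Sum>i<m. if D i then 1 - vn i else 0) / real (card {i. i < m \<and> D i})"
proof -
  have "{i. i < m \<and> \<beta> < vn i} = {i. i < m \<and> D i}"
    using assms by auto
  moreover have "(\<Sum>i<m. if \<beta> < vn i then 1 - vn i else 0) = (\<Sum>i<m. if D i then 1 - vn i else 0)"
    using assms by (intro sum.cong) auto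
  moreover have "(\<Sum>i<m. if D i then 1 - vn i else 0) = 0" if "card {i. i < m \<and> D i} = 0"
    using that by (intro sum.neutral) auto
  ultimately show ?thesis
    unfolding FDR_X_def add_decision_def by (cases "card {i. i < m \<and> D i}") auto
qed

text \<open>The nonnull event eventually contains almost every outcome, so conditioning on it is
  asymptotically vacuous.\<close>

lemma pBFDR_tendsto_of_eventually_decisions:
  fixes v :: "nat \<Rightarrow> nat \<Rightarrow> 'a \<Rightarrow> real" and D :: "nat \<Rightarrow> bool"
  assumes "prob_space M"
    and v_meas: "\<And>n i. i < m \<Longrightarrow> v n i \<in> borel_measurable M"
    and v_range: "\<And>n i w. i < m \<Longrightarrow> w \<in> space M \<Longrightarrow> 0 \<le> v n i w \<and> v n i w \<le> 1"
    and D_nonempty: "\<exists>i<m. D i"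
    and decisions: "AE w in M. \<forall>\<^sub>F n in sequentially. \<forall>i<m. \<beta> < v n i w \<longleftrightarrow> D i"
    and sums: "AE w in M. (\<lambda>n. \<Sum>i<m. if D i then 1 - v n i w else 0) \<longlonglongrightarrow> S"
  shows "(\<lambda>n. pBFDR M m v n \<beta>) \<longlonglongrightarrow> S / real (card {i. i < m \<and> D i})"
proof -
  interpret prob_space M by fact
  define c where "c = real (card {i. i < m \<and> D i})"
  define E where "E n = nonnull_event M m v \<beta> n" for n
  define F where "F n w = FDR_X m (\<lambda>j. v n j w) (add_decision \<beta> (\<lambda>j. v n j w))" for n w
  have c_pos: "c > 0"
    using D_nonempty unfolding c_def by (auto simp: card_gt_0_iff)
  have E_sets [measurable]: "E n \<in> sets M" for n
    unfolding E_def using v_meas by (rule nonnull_event_sets)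
  have F_meas [measurable]: "F n \<in> borel_measurable M" for n
    unfolding F_def using v_meas by (rule FDR_X_add_decision_measurable)
  have stable: "AE w in M. \<forall>\<^sub>F n in sequentially. indicator (E n) w = (1::real) \<and>
      F n w = (\<Sum>i<m. if D i then 1 - v n i w else 0) / c"
    using AE_space decisions
  proof eventually_elim
    case (elim w)
    show ?case
      using elim(2)
    proof (rule eventually_mono)
      fix n assume dec: "\<forall>i<m. \<beta> < v n i w \<longleftrightarrow> D i"
      then have "w \<in> E n"
        using D_nonempty elim(1) unfolding E_def nonnull_event_def add_decision_def by auto
      then show "indicator (E n) w = (1::real) \<and>
          F n w = (\<Sum>i<m. if D i then 1 - v n i w else 0) / c"
        unfolding F_def c_def using FDR_X_add_decision_eq[OF dec] by simp
    qed
  qed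
  have numerator: "(\<lambda>n. integral\<^sup>L M (\<lambda>w. indicator (E n) w * F n w)) \<longlonglongrightarrow> S / c"
  proof (rule tendsto_integral_bounded)
    show "\<bar>indicator (E n) w * F n w\<bar> \<le> 1" if "w \<in> space M" for n w
      using FDR_X_bounds[of m "\<lambda>j. v n j w"] v_range that
      by (auto simp: F_def indicator_def)
    show "AE w in M. (\<lambda>n. indicator (E n) w * F n w) \<longlonglongrightarrow> S / c"
      using stable sums
    proof eventually_elim
      case (elim w)
      have "(\<lambda>n. (\<Sum>i<m. if D i then 1 - v n i w else 0) / c) \<longlonglongrightarrow> S / c"
        using elim(2) c_pos by (intro tendsto_divide tendsto_const) auto
      then show ?case
        by (rule Lim_transform_eventually) (use elim(1) in \<open>auto elim: eventually_mono\<close>)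
    qed
  qed simp
  have "(\<lambda>n. integral\<^sup>L M (indicator (E n) :: 'a \<Rightarrow> real)) \<longlonglongrightarrow> 1"
  proof (rule tendsto_integral_bounded)
    show "AE w in M. (\<lambda>n. indicator (E n) w :: real) \<longlonglongrightarrow> 1"
      using stable
      by eventually_elim (rule tendsto_eventually, auto elim: eventually_mono)
  qed (auto simp: indicator_def)
  then have denominator: "(\<lambda>n. measure M (E n)) \<longlonglongrightarrow> 1"
    by simp
  have "(\<lambda>n. integral\<^sup>L M (\<lambda>w. indicator (E n) w * F n w) / measure M (E n)) \<longlonglongrightarrow> (S / c) / 1"
    using numerator denominator by (intro tendsto_divide) auto
  then show ?thesis
    unfolding pBFDR_def E_def F_def c_def by simp
qed

text \<open>Since ln 0 = 0 in Isabelle, a negative rate forces x n \<noteq> 0 eventually.\<close>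

lemma eventually_pos_of_ln_rate:
  fixes x :: "nat \<Rightarrow> real"
  assumes nonneg: "\<And>n. 0 \<le> x n"
    and rate: "(\<lambda>n. ln (x n) / real n) \<longlonglongrightarrow> - c" and "c > 0"
  shows "\<forall>\<^sub>F n in sequentially. 0 < x n"
  using order_tendstoD(2)[OF rate, of 0] \<open>c > 0\<close>
  by (auto elim!: eventually_mono intro: order.not_eq_order_implies_strict[OF _ nonneg])

lemma tendsto_zero_of_ln_rate:
  fixes x :: "nat \<Rightarrow> real"
  assumes nonneg: "\<And>n. 0 \<le> x n"
    and rate: "(\<lambda>n. ln (x n) / real n) \<longlonglongrightarrow> - c" and "c > 0"
  shows "x \<longlonglongrightarrow> 0"
proof -
  have "filterlim (\<lambda>n. ln (x n) / real n * real n) at_bot sequentially"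
    using \<open>c > 0\<close> by (intro filterlim_tendsto_neg_mult_at_bot[OF rate] filterlim_real_sequentially) simp
  then have "((\<lambda>n. exp (ln (x n) / real n * real n)) \<longlongrightarrow> 0) sequentially"
    by (rule filterlim_compose[OF exp_at_bot])
  moreover have "\<forall>\<^sub>F n in sequentially. exp (ln (x n) / real n * real n) = x n"
    using eventually_pos_of_ln_rate[OF nonneg rate \<open>c > 0\<close>] eventually_gt_at_top[of 0]
    by eventually_elim simp
  ultimately show ?thesis
    by (rule Lim_transform_eventually)
qed

definition consistent_posteriors ::
  "'a measure \<Rightarrow> nat \<Rightarrow> (nat \<Rightarrow> bool) \<Rightarrow> (nat \<Rightarrow> nat \<Rightarrow> 'a \<Rightarrow> real) \<Rightarrow> bool" where
  "consistent_posteriors M m dt v \<longleftrightarrow>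
     (AE w in M. \<forall>i<m. (\<lambda>n. v n i w) \<longlonglongrightarrow> (if dt i then 1 else 0) \<and>
                       (\<forall>\<^sub>F n in sequentially. 0 < v n i w))"

lemma consistent_posteriors_of_ln_rates:
  assumes prob: "prob_space M"
    and v_range: "\<And>n i w. i < m \<Longrightarrow> w \<in> space M \<Longrightarrow> 0 \<le> v n i w \<and> v n i w \<le> 1"
    and rate1: "\<And>i. i < m \<Longrightarrow> AE w in M. (\<lambda>n. ln (v n i w) / real n) \<longlonglongrightarrow> - J1 i"
    and rate0: "\<And>i. i < m \<Longrightarrow> AE w in M. (\<lambda>n. ln (1 - v n i w) / real n) \<longlonglongrightarrow> - J0 i"
    and J1_pos: "\<And>i. i < m \<Longrightarrow> \<not> dt i \<Longrightarrow> J1 i > 0"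
    and J0_pos: "\<And>i. i < m \<Longrightarrow> dt i \<Longrightarrow> J0 i > 0"
  shows "consistent_posteriors M m dt v"
proof -
  interpret prob_space M by (rule prob)
  have "AE w in M. \<forall>i\<in>{..<m}. (\<lambda>n. ln (v n i w) / real n) \<longlonglongrightarrow> - J1 i \<and>
                               (\<lambda>n. ln (1 - v n i w) / real n) \<longlonglongrightarrow> - J0 i"
    using rate0 rate1 by (intro AE_finite_allI) auto
  then show ?thesis
    unfolding consistent_posteriors_def using AE_space
  proof eventually_elim
    case (elim w)
    show ?case
    proof (intro allI impI)
      fix i assume i: "i < m"
      show "(\<lambda>n. v n i w) \<longlonglongrightarrow> (if dt i then 1 else 0) \<and> (\<forall>\<^sub>F n in sequentially. 0 < v n i w)"
      proof (cases "dt i")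
        case True
        have "(\<lambda>n. 1 - v n i w) \<longlonglongrightarrow> 0"
          using elim i v_range J0_pos True by (intro tendsto_zero_of_ln_rate[of _ "J0 i"]) auto
        then have "(\<lambda>n. 1 - (1 - v n i w)) \<longlonglongrightarrow> 1 - 0"
          by (intro tendsto_diff tendsto_const)
        then have "(\<lambda>n. v n i w) \<longlonglongrightarrow> 1"
          by simp
        with True show ?thesis
          using order_tendstoD(1)[of "\<lambda>n. v n i w" 1 sequentially 0] by simp
      next
        case False
        have nonneg: "0 \<le> v n i w" for n
          using v_range i elim(2) by blast
        have "(\<lambda>n. ln (v n i w) / real n) \<longlonglongrightarrow> - J1 i" and "J1 i > 0"
          using elim i J1_pos False by auto
        with False show ?thesis
          using eventually_pos_of_ln_rate tendsto_zero_of_ln_rate nonneg by simp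
      qed
    qed
  qed
qed

lemma pBFDR_threshold_zero_tendsto:
  fixes v :: "nat \<Rightarrow> nat \<Rightarrow> 'a \<Rightarrow> real"
  assumes prob: "prob_space M"
    and v_meas: "\<And>n i. i < m \<Longrightarrow> v n i \<in> borel_measurable M"
    and v_range: "\<And>n i w. i < m \<Longrightarrow> w \<in> space M \<Longrightarrow> 0 \<le> v n i w \<and> v n i w \<le> 1"
    and consistent: "consistent_posteriors M m dt v"
    and "m > 0"
  shows "(\<lambda>n. pBFDR M m v n 0) \<longlonglongrightarrow> real (card {i. i < m \<and> \<not> dt i}) / real m"
proof -
  have "(\<lambda>n. pBFDR M m v n 0) \<longlonglongrightarrow> real (card {i. i < m \<and> \<not> dt i}) / real (card {i. i < m \<and> True})"
  proof (rule pBFDR_tendsto_of_eventually_decisions[OF prob v_meas v_range])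
    show "\<exists>i<m. True"
      using \<open>m > 0\<close> by auto
    show "AE w in M. \<forall>\<^sub>F n in sequentially. \<forall>i<m. 0 < v n i w \<longleftrightarrow> True"
      using consistent unfolding consistent_posteriors_def
    proof eventually_elim
      case (elim w)
      have "\<forall>\<^sub>F n in sequentially. \<forall>i\<in>{..<m}. 0 < v n i w"
        using elim by (intro eventually_ball_finite) auto
      then show ?case
        by (auto elim: eventually_mono)
    qed
    show "AE w in M. (\<lambda>n. \<Sum>i<m. if True then 1 - v n i w else 0)
        \<longlonglongrightarrow> real (card {i. i < m \<and> \<not> dt i})"
      using consistent unfolding consistent_posteriors_def
    proof eventually_elim
      case (elim w)
      have "(\<lambda>n. \<Sum>i<m. 1 - v n i w) \<longlonglongrightarrow> (\<Sum>i<m. 1 - (if dt i then 1 else 0))"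
        using elim by (intro tendsto_sum tendsto_diff tendsto_const) auto
      also have "(\<Sum>i<m. 1 - (if dt i then 1 else 0::real)) = (\<Sum>i<m. if \<not> dt i then 1 else 0)"
        by (intro sum.cong) auto
      also have "\<dots> = real (card ({..<m} \<inter> {i. \<not> dt i}))"
        by (simp add: sum.If_cases)
      also have "{..<m} \<inter> {i. \<not> dt i} = {i. i < m \<and> \<not> dt i}"
        by auto
      finally show ?case
        by simp
    qed
  qed
  then show ?thesis
    by simp
qed

lemma eventually_threshold_decisions:
  fixes x :: "nat \<Rightarrow> nat \<Rightarrow> real"
  assumes lim: "\<And>i. i < m \<Longrightarrow> (\<lambda>n. x n i) \<longlonglongrightarrow> (if d i then 1 else 0)"
    and "0 < b" "b < 1"
  shows "\<forall>\<^sub>F n in sequentially. \<forall>i<m. b < x n i \<longleftrightarrow> d i"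
proof -
  have "\<forall>\<^sub>F n in sequentially. b < x n i \<longleftrightarrow> d i" if "i < m" for i
  proof (cases "d i")
    case True
    then show ?thesis
      using lim[OF that] \<open>b < 1\<close> order_tendstoD(1)[of "\<lambda>n. x n i" 1 sequentially b] by auto
  next
    case False
    then have "\<forall>\<^sub>F n in sequentially. x n i < b"
      using lim[OF that] \<open>0 < b\<close> order_tendstoD(2)[of "\<lambda>n. x n i" 0 sequentially b] by auto
    with False show ?thesis
      by (auto elim: eventually_mono)
  qed
  then have "\<forall>\<^sub>F n in sequentially. \<forall>i\<in>{..<m}. b < x n i \<longleftrightarrow> d i"
    by (intro eventually_ball_finite) auto
  then show ?thesis
    by (rule eventually_mono) simp
qed

lemma pBFDR_threshold_interior_tendsto:
  fixes v :: "nat \<Rightarrow> nat \<Rightarrow> 'a \<Rightarrow> real"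
  assumes prob: "prob_space M"
    and v_meas: "\<And>n i. i < m \<Longrightarrow> v n i \<in> borel_measurable M"
    and v_range: "\<And>n i w. i < m \<Longrightarrow> w \<in> space M \<Longrightarrow> 0 \<le> v n i w \<and> v n i w \<le> 1"
    and consistent: "consistent_posteriors M m dt v"
    and "\<exists>i<m. dt i" and "0 < b" "b < 1"
  shows "(\<lambda>n. pBFDR M m v n b) \<longlonglongrightarrow> 0"
proof -
  have "(\<lambda>n. pBFDR M m v n b) \<longlonglongrightarrow> 0 / real (card {i. i < m \<and> dt i})"
  proof (rule pBFDR_tendsto_of_eventually_decisions[OF prob v_meas v_range \<open>\<exists>i<m. dt i\<close>])
    show "AE w in M. \<forall>\<^sub>F n in sequentially. \<forall>i<m. b < v n i w \<longleftrightarrow> dt i"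
      using consistent unfolding consistent_posteriors_def
    proof eventually_elim
      case (elim w)
      then show ?case
        using \<open>0 < b\<close> \<open>b < 1\<close> by (intro eventually_threshold_decisions) auto
    qed
    show "AE w in M. (\<lambda>n. \<Sum>i<m. if dt i then 1 - v n i w else 0) \<longlonglongrightarrow> 0"
      using consistent unfolding consistent_posteriors_def
    proof eventually_elim
      case (elim w)
      have "(\<lambda>n. \<Sum>i<m. if dt i then 1 - v n i w else 0) \<longlonglongrightarrow> (\<Sum>i<m. 0::real)"
      proof (intro tendsto_sum)
        fix i assume "i \<in> {..<m}"
        then have "(\<lambda>n. v n i w) \<longlonglongrightarrow> (if dt i then 1 else 0)"
          using elim by simp
        then show "(\<lambda>n. if dt i then 1 - v n i w else 0) \<longlonglongrightarrow> 0"
          by (cases "dt i") (auto dest: tendsto_diff[OF tendsto_const[of "1::real"]])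
      qed
      then show ?case
        by simp
    qed
  qed
  then show ?thesis
    by simp
qed

lemma eventually_level_crossing_in:
  fixes g :: "nat \<Rightarrow> real \<Rightarrow> real"
  assumes cont: "\<And>n. continuous_on {0..1} (g n)"
    and above: "\<forall>\<^sub>F n in sequentially. \<alpha> < g n 0"
    and below: "\<forall>\<^sub>F n in sequentially. g n e < \<alpha>"
    and "0 \<le> e" "e \<le> 1"
  shows "\<forall>\<^sub>F n in sequentially. \<exists>b\<in>{0..e}. g n b = \<alpha>"
  using above below
proof eventually_elim
  case (elim n)
  have "continuous_on {0..e} (g n)"
    using continuous_on_subset[OF cont[of n]] \<open>e \<le> 1\<close> by auto
  with elim \<open>0 \<le> e\<close> show ?case
    using IVT2'[of "g n" e \<alpha> 0] by auto
qed

text \<open>The least solution of g n b = alpha in [0, 1] lies below every solution in [0, e], which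
  forces it to 0.\<close>

lemma vanishing_level_crossings:
  fixes g :: "nat \<Rightarrow> real \<Rightarrow> real"
  assumes cont: "\<And>n. continuous_on {0..1} (g n)"
    and above: "\<forall>\<^sub>F n in sequentially. \<alpha> < g n 0"
    and below: "\<And>b. 0 < b \<Longrightarrow> b < 1 \<Longrightarrow> \<forall>\<^sub>F n in sequentially. g n b < \<alpha>"
  shows "\<exists>\<beta>. (\<forall>n. 0 \<le> \<beta> n \<and> \<beta> n \<le> 1) \<and> \<beta> \<longlonglongrightarrow> 0 \<and>
             (\<forall>\<^sub>F n in sequentially. g n (\<beta> n) = \<alpha>)"
proof -
  define S where "S n = {b \<in> {0..1}. g n b = \<alpha>}" for n
  define \<beta> where "\<beta> n = (if S n = {} then 0 else Inf (S n))" for n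
  have Inf_S: "Inf (S n) \<in> S n" if "S n \<noteq> {}" for n
    using that continuous_closed_preimage_constant[OF cont]
    by (intro closed_contains_Inf) (auto simp: S_def bdd_below_def)
  have range: "0 \<le> \<beta> n \<and> \<beta> n \<le> 1" for n
    using Inf_S[of n] by (auto simp: \<beta>_def S_def)
  have small: "\<forall>\<^sub>F n in sequentially. \<beta> n \<le> e \<and> g n (\<beta> n) = \<alpha>" if "0 < e" "e < 1" for e
  proof -
    have "\<forall>\<^sub>F n in sequentially. \<exists>b\<in>{0..e}. g n b = \<alpha>"
      using that by (intro eventually_level_crossing_in[OF cont above below[OF that]]) auto
    then show ?thesis
    proof eventually_elim
      case (elim n)
      then obtain b where "b \<in> {0..e}" "g n b = \<alpha>"
        by blast
      with that have b: "b \<in> S n" "b \<le> e"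
        by (auto simp: S_def)
      then have "Inf (S n) \<le> b"
        by (intro cInf_lower) (auto simp: S_def bdd_below_def)
      with b Inf_S[of n] show ?case
        by (auto simp: \<beta>_def S_def)
    qed
  qed
  have "\<beta> \<longlonglongrightarrow> 0"
  proof (rule tendstoI)
    fix e :: real assume "0 < e"
    then have "0 < min (e / 2) (1 / 2)" "min (e / 2) (1 / 2) < 1"
      by auto
    from small[OF this] show "\<forall>\<^sub>F n in sequentially. dist (\<beta> n) 0 < e"
      by (rule eventually_mono) (use range \<open>0 < e\<close> in auto)
  qed
  moreover have "\<forall>\<^sub>F n in sequentially. g n (\<beta> n) = \<alpha>"
    using small[of "1 / 2"] by (auto elim: eventually_mono)
  ultimately show ?thesis
    using range by blast
qed

theorem theorem9:
  fixes M :: "'a measure"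
    and m :: nat
    and dt :: "nat \<Rightarrow> bool"
    and v :: "nat \<Rightarrow> nat \<Rightarrow> 'a \<Rightarrow> real"
    and J0 J1 :: "nat \<Rightarrow> real"
  assumes prob: "prob_space M"
    and v_meas: "\<And>n i. i < m \<Longrightarrow> v n i \<in> borel_measurable M"
    and v_range: "\<And>n i w. i < m \<Longrightarrow> w \<in> space M \<Longrightarrow> 0 \<le> v n i w \<and> v n i w \<le> 1"
    and shalizi1: "\<And>i. i < m \<Longrightarrow>
        AE w in M. (\<lambda>n. ln (v n i w) / real n) \<longlonglongrightarrow> - J1 i"
    and shalizi0: "\<And>i. i < m \<Longrightarrow>
        AE w in M. (\<lambda>n. ln (1 - v n i w) / real n) \<longlonglongrightarrow> - J0 i"
    and J1_pos: "\<And>i. i < m \<Longrightarrow> \<not> dt i \<Longrightarrow> J1 i > 0"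
    and J0_pos: "\<And>i. i < m \<Longrightarrow> dt i \<Longrightarrow> J0 i > 0"
    and m0_pos: "card {i. i < m \<and> \<not> dt i} \<ge> 1"
    and m0_lt: "card {i. i < m \<and> \<not> dt i} < m"
    and cont: "\<And>n. continuous_on {0..1} (pBFDR M m v n)"
    and mono: "\<And>n \<beta>1 \<beta>2. 0 \<le> \<beta>1 \<Longrightarrow> \<beta>1 \<le> \<beta>2 \<Longrightarrow> \<beta>2 \<le> 1 \<Longrightarrow>
                 pBFDR M m v n \<beta>2 \<le> pBFDR M m v n \<beta>1"
  shows "\<forall>\<alpha>. 0 < \<alpha> \<and> \<alpha> < real (card {i. i < m \<and> \<not> dt i}) / real m \<longrightarrow>
           (\<exists>\<beta> :: nat \<Rightarrow> real. (\<forall>n. 0 \<le> \<beta> n \<and> \<beta> n \<le> 1) \<and> \<beta> \<longlonglongrightarrow> 0 \<and>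
              (\<lambda>n. pBFDR M m v n (\<beta> n)) \<longlonglongrightarrow> \<alpha>)"
proof (intro allI impI)
  fix \<alpha> :: real
  assume "0 < \<alpha> \<and> \<alpha> < real (card {i. i < m \<and> \<not> dt i}) / real m"
  then have "0 < \<alpha>" and \<alpha>_below: "\<alpha> < real (card {i. i < m \<and> \<not> dt i}) / real m"
    by auto
  have "\<exists>i<m. dt i"
  proof (rule ccontr)
    assume "\<not> (\<exists>i<m. dt i)"
    then have "{i. i < m \<and> \<not> dt i} = {..<m}"
      by auto
    with m0_lt show False
      by simp
  qed
  have consistent: "consistent_posteriors M m dt v"
    using prob v_range shalizi1 shalizi0 J1_pos J0_pos by (rule consistent_posteriors_of_ln_rates)
  have "(\<lambda>n. pBFDR M m v n 0) \<longlonglongrightarrow> real (card {i. i < m \<and> \<not> dt i}) / real m"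
    using m0_lt by (intro pBFDR_threshold_zero_tendsto[OF prob v_meas v_range consistent]) auto
  then have above: "\<forall>\<^sub>F n in sequentially. \<alpha> < pBFDR M m v n 0"
    using \<alpha>_below by (rule order_tendstoD(1))
  have below: "\<forall>\<^sub>F n in sequentially. pBFDR M m v n b < \<alpha>" if "0 < b" "b < 1" for b
    using pBFDR_threshold_interior_tendsto[OF prob v_meas v_range consistent \<open>\<exists>i<m. dt i\<close> that]
    using \<open>0 < \<alpha>\<close> by (rule order_tendstoD(2))
  obtain \<beta> where "\<forall>n. 0 \<le> \<beta> n \<and> \<beta> n \<le> 1" "\<beta> \<longlonglongrightarrow> 0"
      and crossing: "\<forall>\<^sub>F n in sequentially. pBFDR M m v n (\<beta> n) = \<alpha>"
    using vanishing_level_crossings[OF cont above below] by blast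
  moreover have "(\<lambda>n. pBFDR M m v n (\<beta> n)) \<longlonglongrightarrow> \<alpha>"
    using crossing by (rule tendsto_eventually)
  ultimately show "\<exists>\<beta> :: nat \<Rightarrow> real. (\<forall>n. 0 \<le> \<beta> n \<and> \<beta> n \<le> 1) \<and> \<beta> \<longlonglongrightarrow> 0 \<and>
      (\<lambda>n. pBFDR M m v n (\<beta> n)) \<longlonglongrightarrow> \<alpha>"
    by blast
qed

end
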